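(* Let $(Z_n)$ be a branching process in random environment as in the context, and assume $z\ge1$ satisfies $\mathbb{P}(Q(0)>0,\,Q(z)>0)>0$. Then for all $k,j\in Cl(\{z\})$ the limits $\lim_n\frac1n\log\mathbb{P}_k(Z_n=j)$ exist, are finite (in $(-\infty,0]$), and all equal $\lim_n\frac1n\log\mathbb{P}_z(Z_n=z)$. Moreover, for every sequence $(k_n)$ of integers with $k_n\ge z$ for $n$ large enough and $k_n/n\to0$, $$\lim_n\tfrac1n\log\mathbb{P}_z(Z_n=z)=\lim_n\tfrac1n\log\mathbb{P}_z(1\le Z_n\le k_n).$$
   Context: $\Delta$ is the set of probability measures on $\mathbb{N}_0$, $q(k)=q(\{k\})$. $Q$ is a random element of $\Delta$, $Q_1,Q_2,\dots$ i.i.d. copies (the environment). $Z_0$ is independent of the environment and, given the environment and $Z_0,\dots,Z_{n-1}$, $Z_n$ has law $Q_n^{*Z_{n-1}}$. $\mathbb{P}_k=\mathbb{P}(\cdot\mid Z_0=k)$. $Cl(\{z\})=\{k\ge1:\exists n\ge0,\ \mathbb{P}_z(Z_n=k)>0\}$. *)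

theory Defs
  imports "HOL-Probability.Probability"
begin

fun conv_pow :: "nat pmf \<Rightarrow> nat \<Rightarrow> nat pmf" where
  "conv_pow q 0 = return_pmf 0"
| "conv_pow q (Suc k) = bind_pmf q (\<lambda>a. map_pmf (\<lambda>b. a + b) (conv_pow q k))"

text \<open>Quenched law of Z_n given Z_0 = k and environment (Q_1,...,Q_n) = qs:
  Z_i has law Q_i^{*Z_{i-1}}.\<close>
fun qlaw :: "nat pmf list \<Rightarrow> nat \<Rightarrow> nat pmf" where
  "qlaw [] k = return_pmf k"
| "qlaw (q # qs) k = bind_pmf (conv_pow q k) (qlaw qs)"

text \<open>Annealed probability P_k(Z_n \<in> A): the environment Q_1,Q_2,... is an i.i.d.
  sequence with law mu (the law of Q), i.e. distributed as stream_space mu.\<close>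
definition bpre_prob :: "nat pmf measure \<Rightarrow> nat \<Rightarrow> nat \<Rightarrow> nat set \<Rightarrow> real" where
  "bpre_prob \<mu> k n A = (\<integral>\<omega>. measure_pmf.prob (qlaw (stake n \<omega>) k) A \<partial>(stream_space \<mu>))"

definition Cl :: "nat pmf measure \<Rightarrow> nat \<Rightarrow> nat set" where
  "Cl \<mu> z = {k. 1 \<le> k \<and> (\<exists>n. bpre_prob \<mu> z n {k} > 0)}"

end

theory Submission
  imports Defs "HOL-Real_Asymp.Real_Asymp"
begin

text \<open>Since the environment after time n is independent of, and distributed like, the
  environment before it, the annealed probabilities satisfy
  P_k(Z_n = i) P_i(Z_m = j) \<le> P_k(Z_(n+m) = j). Hence ln P_z(Z_n = z) is superadditive and
  Fekete's lemma gives its exponential rate. Every state m \<ge> 1 jumps to z in one step with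
  probability at least \<eta> \<delta>^m (one particle gets z children, all others none). So two states
  of the class of z communicate through z at a cost bounded in n, and spreading the mass over
  the window {1..k_n} loses at most a factor k_n / (\<eta> \<delta>^k_n) = e^o(n).\<close>

lemma superadditive_iterate:
  fixes a :: "nat \<Rightarrow> real"
  assumes super: "\<And>m n. a m + a n \<le> a (m + n)"
  shows "real q * a m + a r \<le> a (q * m + r)"
proof (induction q)
  case (Suc q)
  have "real (Suc q) * a m + a r = a m + (real q * a m + a r)" by (simp add: algebra_simps)
  also have "\<dots> \<le> a m + a (q * m + r)" using Suc by simp
  also have "\<dots> \<le> a (Suc q * m + r)" using super[of m "q * m + r"] by (simp add: add.assoc)
  finally show ?case .
qed simp

text \<open>Fekete's lemma: for \<open>n = q m + r\<close> with \<open>r < m\<close> superadditivity gives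
  \<open>a n \<ge> q a m + Min (a ` {..<m})\<close>, and the right-hand side divided by \<open>n\<close> tends to \<open>a m / m\<close>.\<close>
lemma superadditive_tendsto_Sup:
  fixes a :: "nat \<Rightarrow> real"
  assumes super: "\<And>m n. a m + a n \<le> a (m + n)"
    and bdd: "bdd_above ((\<lambda>n. a n / real n) ` {1..})"
  shows "(\<lambda>n. a n / real n) \<longlonglongrightarrow> (SUP n\<in>{1..}. a n / real n)"
    (is "_ \<longlonglongrightarrow> ?L")
proof (rule order_tendstoI)
  fix y assume "?L < y"
  have "a n / real n \<le> ?L" if "n \<ge> 1" for n
    using that by (intro cSUP_upper bdd) simp
  with \<open>?L < y\<close> show "eventually (\<lambda>n. a n / real n < y) sequentially"
    by (intro eventually_sequentiallyI[of 1]) (rule order.strict_trans1)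
next
  fix y assume "y < ?L"
  then obtain m where m: "m \<ge> 1" "y < a m / real m"
    using less_cSUP_iff[OF _ bdd] by auto
  define c where "c = Min (a ` {..<m})"
  have lower: "(real (n div m) * a m + c) / real n \<le> a n / real n" for n
  proof -
    have "c \<le> a (n mod m)"
      unfolding c_def using m by (intro Min_le) auto
    also have "real (n div m) * a m + a (n mod m) \<le> a n"
      using superadditive_iterate[of a "n div m" m "n mod m"] super by simp
    ultimately show ?thesis by (intro divide_right_mono) auto
  qed
  have "(\<lambda>n. real (n div m) / real n) \<longlonglongrightarrow> inverse (real m)"
    using m by real_asymp
  then have "(\<lambda>n. real (n div m) / real n * a m + c / real n) \<longlonglongrightarrow> inverse (real m) * a m + 0"
    by (intro tendsto_intros lim_const_over_n)
  then have "(\<lambda>n. (real (n div m) * a m + c) / real n) \<longlonglongrightarrow> a m / real m"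
    by (simp add: add_divide_distrib field_simps)
  then have "eventually (\<lambda>n. y < (real (n div m) * a m + c) / real n) sequentially"
    using m(2) by (rule order_tendstoD)
  then show "eventually (\<lambda>n. y < a n / real n) sequentially"
    by eventually_elim (use lower in \<open>blast intro: less_le_trans\<close>)
qed

lemma LIMSEQ_shift_div_real:
  fixes a :: "nat \<Rightarrow> real"
  assumes "(\<lambda>n. a n / real n) \<longlonglongrightarrow> L"
  shows "(\<lambda>n. (a (n + s) + C) / real (n + t)) \<longlonglongrightarrow> L"
proof -
  have "(\<lambda>n. a (n + s) / real (n + s) * (real (n + s) / real (n + t)) + C / real (n + t))
      \<longlonglongrightarrow> L * 1 + 0"
  proof (intro tendsto_intros)
    show "(\<lambda>n. a (n + s) / real (n + s)) \<longlonglongrightarrow> L"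
      using LIMSEQ_ignore_initial_segment[OF assms] by simp
    show "(\<lambda>n. real (n + s) / real (n + t)) \<longlonglongrightarrow> 1" by real_asymp
    show "(\<lambda>n. C / real (n + t)) \<longlonglongrightarrow> 0" by real_asymp
  qed
  moreover have "eventually (\<lambda>n. a (n + s) / real (n + s) * (real (n + s) / real (n + t))
      + C / real (n + t) = (a (n + s) + C) / real (n + t)) sequentially"
    using eventually_gt_at_top[of 0] by eventually_elim (simp add: field_simps del: of_nat_add)
  ultimately show ?thesis by (simp add: tendsto_cong)
qed

lemma ln_over_n_tendsto_zero:
  fixes K :: "nat \<Rightarrow> nat"
  assumes "eventually (\<lambda>n. 1 \<le> K n) sequentially" and "(\<lambda>n. real (K n) / real n) \<longlonglongrightarrow> 0"
  shows "(\<lambda>n. ln (real (K n)) / real n) \<longlonglongrightarrow> 0"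
proof (rule tendsto_sandwich[OF _ _ tendsto_const assms(2)])
  show "eventually (\<lambda>n. 0 \<le> ln (real (K n)) / real n) sequentially"
    using assms(1) by eventually_elim simp
  show "eventually (\<lambda>n. ln (real (K n)) / real n \<le> real (K n) / real n) sequentially"
    using assms(1) by eventually_elim (simp add: divide_right_mono ln_le_minus_one[THEN order.trans])
qed

locale ck_kernel =
  fixes p :: "'s \<Rightarrow> nat \<Rightarrow> 's \<Rightarrow> real"
  assumes nonneg: "0 \<le> p k n j"
    and le_1: "p k n j \<le> 1"
    and chapman_kolmogorov_le: "p k n i * p i m j \<le> p k (n + m) j"
begin

definition rate :: "'s \<Rightarrow> real" where
  "rate z = (SUP n\<in>{1..}. ln (p z n z) / real n)"

lemma return_prob_pos:
  assumes "0 < p z 0 z" and "0 < p z 1 z"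
  shows "0 < p z n z"
proof (induction n)
  case (Suc n)
  have "0 < p z n z * p z 1 z" using Suc assms(2) by simp
  also have "\<dots> \<le> p z (Suc n) z" using chapman_kolmogorov_le[of z n z 1 z] by simp
  finally show ?case .
qed (fact assms(1))

lemma ln_chapman_kolmogorov_le:
  assumes "0 < p k n i" and "0 < p i m j"
  shows "ln (p k n i) + ln (p i m j) \<le> ln (p k (n + m) j)"
  using ln_mono[OF chapman_kolmogorov_le[of k n i m j]] assms by (simp add: ln_mult)

lemma return_rate:
  assumes return: "\<And>n. 0 < p z n z"
  shows "(\<lambda>n. ln (p z n z) / real n) \<longlonglongrightarrow> rate z"
proof -
  have "bdd_above ((\<lambda>n. ln (p z n z) / real n) ` {1..})"
    using return le_1 by (intro bdd_aboveI[of _ 0]) (auto intro: divide_nonpos_nonneg)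
  then show ?thesis
    unfolding rate_def using return
    by (intro superadditive_tendsto_Sup ln_chapman_kolmogorov_le)
qed

lemma rate_nonpos:
  assumes "\<And>n. 0 < p z n z"
  shows "rate z \<le> 0"
  using assms le_1
  by (intro LIMSEQ_le_const2[OF return_rate[OF assms]] exI[of _ 0] allI impI
      divide_nonpos_nonneg) simp_all

lemma chapman_kolmogorov_pos:
  "0 < p k n i \<Longrightarrow> 0 < p i m j \<Longrightarrow> 0 < p k (n + m) j"
  using chapman_kolmogorov_le[of k n i m j] by (meson mult_pos_pos order.strict_trans2)

text \<open>Paths \<open>k \<leadsto> z \<leadsto> z \<leadsto> j\<close> bound \<open>p k n j\<close> below, and paths
  \<open>z \<leadsto> k \<leadsto> j \<leadsto> z\<close> above, by return probabilities of \<open>z\<close>.\<close>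
lemma communicating_rate:
  assumes return: "\<And>n. 0 < p z n z"
    and kz: "0 < p k n\<^sub>1 z" and zj: "0 < p z n\<^sub>2 j"
    and zk: "0 < p z n\<^sub>3 k" and jz: "0 < p j n\<^sub>4 z"
  shows "eventually (\<lambda>n. 0 < p k n j) sequentially"
    and "(\<lambda>n. ln (p k n j) / real n) \<longlonglongrightarrow> rate z"
proof -
  define a where "a n = ln (p z n z)" for n
  define d where "d = n\<^sub>1 + n\<^sub>2"
  define C\<^sub>1 where "C\<^sub>1 = ln (p k n\<^sub>1 z) + ln (p z n\<^sub>2 j)"
  define C\<^sub>2 where "C\<^sub>2 = - (ln (p z n\<^sub>3 k) + ln (p j n\<^sub>4 z))"
  have path: "0 < p k (n\<^sub>1 + n) z" for n
    using chapman_kolmogorov_pos[OF kz return] .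
  have pos: "0 < p k (n + d) j" for n
    using chapman_kolmogorov_pos[OF path[of n] zj] by (simp add: d_def ac_simps)
  have lower: "a (n + 0) + C\<^sub>1 \<le> ln (p k (n + d) j)" for n
  proof -
    have "ln (p k n\<^sub>1 z) + a n + ln (p z n\<^sub>2 j) \<le> ln (p k (n\<^sub>1 + n) z) + ln (p z n\<^sub>2 j)"
      unfolding a_def using ln_chapman_kolmogorov_le[OF kz return] by simp
    also have "\<dots> \<le> ln (p k (n + d) j)"
      using ln_chapman_kolmogorov_le[OF path[of n] zj] by (simp add: d_def ac_simps)
    finally show ?thesis by (simp add: C\<^sub>1_def)
  qed
  have upper: "ln (p k (n + d) j) \<le> a (n + (d + n\<^sub>3 + n\<^sub>4)) + C\<^sub>2" for n
  proof -
    have "ln (p z n\<^sub>3 k) + ln (p k (n + d) j) + ln (p j n\<^sub>4 z)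
        \<le> ln (p z (n\<^sub>3 + (n + d)) j) + ln (p j n\<^sub>4 z)"
      using ln_chapman_kolmogorov_le[OF zk pos[of n]] by simp
    also have "\<dots> \<le> a (n + (d + n\<^sub>3 + n\<^sub>4))"
      unfolding a_def
      using ln_chapman_kolmogorov_le[OF chapman_kolmogorov_pos[OF zk pos[of n]] jz]
      by (simp add: ac_simps)
    finally show ?thesis by (simp add: C\<^sub>2_def)
  qed
  have a_rate: "(\<lambda>n. a n / real n) \<longlonglongrightarrow> rate z"
    unfolding a_def by (rule return_rate[OF return])
  have "(\<lambda>n. ln (p k (n + d) j) / real (n + d)) \<longlonglongrightarrow> rate z"
  proof (rule tendsto_sandwich)
    show "eventually (\<lambda>n. (a (n + 0) + C\<^sub>1) / real (n + d) \<le> ln (p k (n + d) j) / real (n + d))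
        sequentially"
      using lower by (intro always_eventually allI divide_right_mono) simp_all
    show "eventually (\<lambda>n. ln (p k (n + d) j) / real (n + d)
        \<le> (a (n + (d + n\<^sub>3 + n\<^sub>4)) + C\<^sub>2) / real (n + d)) sequentially"
      using upper by (intro always_eventually allI divide_right_mono) simp_all
  qed (intro LIMSEQ_shift_div_real a_rate)+
  then show "(\<lambda>n. ln (p k n j) / real n) \<longlonglongrightarrow> rate z"
    by (rule LIMSEQ_offset)
  show "eventually (\<lambda>n. 0 < p k n j) sequentially"
  proof (rule eventually_sequentiallyI)
    show "0 < p k n j" if "d \<le> n" for n
      using pos[of "n - d"] that by simp
  qed
qed

end

lemma (in ck_kernel) sum_le_card_mult_return:
  assumes "finite A" and "0 < c" and "\<And>m. m \<in> A \<Longrightarrow> c \<le> p m 1 z"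
  shows "(\<Sum>m\<in>A. p z n m) \<le> real (card A) * (p z (n + 1) z / c)"
proof -
  have "p z n m \<le> p z (n + 1) z / c" if "m \<in> A" for m
  proof -
    have "p z n m * c \<le> p z n m * p m 1 z"
      using assms(3)[OF that] by (intro mult_left_mono nonneg)
    also have "\<dots> \<le> p z (n + 1) z" by (rule chapman_kolmogorov_le)
    finally show ?thesis using assms(2) by (simp add: pos_le_divide_eq)
  qed
  then show ?thesis by (rule sum_bounded_above)
qed

text \<open>One more step from the window \<open>{1..K}\<close> back to \<open>z\<close> shows that the window
  carries at most \<open>K / (\<eta> \<delta>\<^sup>K)\<close> times the return probability.\<close>
lemma ln_window_sum_le:
  fixes p :: "nat \<Rightarrow> nat \<Rightarrow> nat \<Rightarrow> real"
  assumes "ck_kernel p"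
    and return: "\<And>n. 0 < p z n z"
    and one_step: "\<And>m. 1 \<le> m \<Longrightarrow> \<eta> * \<delta> ^ m \<le> p m 1 z"
    and \<eta>: "0 < \<eta>" and \<delta>: "0 < \<delta>" "\<delta> \<le> 1"
    and z: "1 \<le> z" "z \<le> K"
  shows "ln (\<Sum>m=1..K. p z n m) \<le> ln (real K) + ln (p z (n + 1) z) - ln \<eta> - real K * ln \<delta>"
proof -
  interpret ck_kernel p by (fact assms(1))
  have "\<eta> * \<delta> ^ K \<le> p m 1 z" if "m \<in> {1..K}" for m
  proof -
    have "\<eta> * \<delta> ^ K \<le> \<eta> * \<delta> ^ m"
      using that \<eta> \<delta> by (intro mult_left_mono power_decreasing) auto
    also have "\<dots> \<le> p m 1 z" using that by (intro one_step) simp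
    finally show ?thesis .
  qed
  then have "(\<Sum>m=1..K. p z n m) \<le> real K * (p z (n + 1) z / (\<eta> * \<delta> ^ K))"
    using sum_le_card_mult_return[of "{1..K}" "\<eta> * \<delta> ^ K"] \<eta> \<delta> by simp
  moreover have "p z n z \<le> (\<Sum>m=1..K. p z n m)"
    using z nonneg by (intro member_le_sum) auto
  ultimately have "ln (\<Sum>m=1..K. p z n m) \<le> ln (real K * (p z (n + 1) z / (\<eta> * \<delta> ^ K)))"
    using return[of n] by simp
  also have "\<dots> = ln (real K) + ln (p z (n + 1) z) - ln \<eta> - real K * ln \<delta>"
    using z return[of "n + 1"] \<eta> \<delta> by (simp add: ln_mult ln_div ln_realpow)
  finally show ?thesis .
qed

lemma window_rate:
  fixes p :: "nat \<Rightarrow> nat \<Rightarrow> nat \<Rightarrow> real" and K :: "nat \<Rightarrow> nat"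
  assumes "ck_kernel p"
    and return: "\<And>n. 0 < p z n z"
    and one_step: "\<And>m. 1 \<le> m \<Longrightarrow> \<eta> * \<delta> ^ m \<le> p m 1 z"
    and \<eta>: "0 < \<eta>" and \<delta>: "0 < \<delta>" "\<delta> \<le> 1"
    and z: "1 \<le> z" and K_ge: "eventually (\<lambda>n. z \<le> K n) sequentially"
    and K_sublinear: "(\<lambda>n. real (K n) / real n) \<longlonglongrightarrow> 0"
  shows "eventually (\<lambda>n. 0 < (\<Sum>m=1..K n. p z n m)) sequentially"
    and "(\<lambda>n. ln (\<Sum>m=1..K n. p z n m) / real n) \<longlonglongrightarrow> ck_kernel.rate p z"
proof -
  interpret ck_kernel p by (fact assms(1))
  define S where "S n = (\<Sum>m=1..K n. p z n m)" for n
  define a where "a n = ln (p z n z)" for n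
  have lower: "a n \<le> ln (S n)" and pos: "0 < S n" if "z \<le> K n" for n
  proof -
    have "p z n z \<le> S n"
      unfolding S_def using that z nonneg by (intro member_le_sum) auto
    then show "a n \<le> ln (S n)" and "0 < S n"
      unfolding a_def using return[of n] by simp_all
  qed
  show "eventually (\<lambda>n. 0 < S n) sequentially"
    using K_ge by eventually_elim (rule pos)
  have a_rate: "(\<lambda>n. a n / real n) \<longlonglongrightarrow> rate z"
    unfolding a_def by (rule return_rate[OF return])
  define U where "U n = (a (n + 1) + - ln \<eta>) / real (n + 0) + ln (real (K n)) / real n
    - ln \<delta> * (real (K n) / real n)" for n
  have "eventually (\<lambda>n. 1 \<le> K n) sequentially"
    using K_ge by eventually_elim (use z in simp)
  then have "U \<longlonglongrightarrow> rate z + 0 - ln \<delta> * 0"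
    unfolding U_def
    by (intro tendsto_intros LIMSEQ_shift_div_real a_rate ln_over_n_tendsto_zero K_sublinear)
  then have U_rate: "U \<longlonglongrightarrow> rate z" by simp
  show "(\<lambda>n. ln (S n) / real n) \<longlonglongrightarrow> rate z"
  proof (rule tendsto_sandwich[OF _ _ a_rate U_rate])
    show "eventually (\<lambda>n. a n / real n \<le> ln (S n) / real n) sequentially"
      using K_ge by eventually_elim (intro divide_right_mono lower of_nat_0_le_iff)
    show "eventually (\<lambda>n. ln (S n) / real n \<le> U n) sequentially"
      using K_ge
    proof eventually_elim
      case (elim n)
      have "ln (S n) \<le> ln (real (K n)) + a (n + 1) - ln \<eta> - real (K n) * ln \<delta>"
        unfolding S_def a_def using assms(1) return one_step \<eta> \<delta> z elim
        by (rule ln_window_sum_le)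
      then have "ln (S n) / real n
          \<le> (ln (real (K n)) + a (n + 1) - ln \<eta> - real (K n) * ln \<delta>) / real n"
        by (rule divide_right_mono) simp
      also have "\<dots> = U n" by (simp add: U_def diff_divide_distrib add_divide_distrib)
      finally show ?case .
    qed
  qed
qed

lemma pmf_conv_pow_Suc:
  "pmf (conv_pow q (Suc k)) m = (\<Sum>a\<le>m. pmf q a * pmf (conv_pow q k) (m - a))"
proof -
  have shift: "pmf (map_pmf (\<lambda>b. a + b) r) m = (if a \<le> m then pmf r (m - a) else 0)"
    for a and r :: "nat pmf"
  proof (cases "a \<le> m")
    case True
    have "pmf (map_pmf (\<lambda>b. a + b) r) (a + (m - a)) = pmf r (m - a)"
      by (rule pmf_map_inj') (auto simp: inj_def)
    with True show ?thesis by simp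
  qed (auto intro!: pmf_map_outside)
  have "ennreal (pmf (conv_pow q (Suc k)) m)
      = (\<integral>\<^sup>+a. ennreal (pmf q a * pmf (conv_pow q k) (m - a)) * indicator {..m} a \<partial>count_space UNIV)"
    by (auto simp: ennreal_pmf_bind nn_integral_measure_pmf shift ennreal_mult
        intro!: nn_integral_cong)
  also have "\<dots> = (\<Sum>a\<le>m. ennreal (pmf q a * pmf (conv_pow q k) (m - a)))"
    by (simp add: nn_integral_count_space_indicator[symmetric] nn_integral_count_space_finite)
  also have "\<dots> = ennreal (\<Sum>a\<le>m. pmf q a * pmf (conv_pow q k) (m - a))"
    by (rule sum_ennreal) simp
  finally show ?thesis by (simp add: sum_nonneg)
qed

lemma pmf_conv_pow_zero: "pmf (conv_pow q k) 0 = pmf q 0 ^ k"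
  by (induction k) (simp_all add: pmf_conv_pow_Suc del: conv_pow.simps(2))

lemma pmf_conv_pow_Suc_ge: "pmf q j * pmf q 0 ^ k \<le> pmf (conv_pow q (Suc k)) j"
proof -
  have "pmf q j * pmf q 0 ^ k = pmf q j * pmf (conv_pow q k) (j - j)"
    by (simp add: pmf_conv_pow_zero)
  also have "\<dots> \<le> (\<Sum>a\<le>j. pmf q a * pmf (conv_pow q k) (j - a))"
    by (rule member_le_sum) auto
  finally show ?thesis by (simp only: pmf_conv_pow_Suc)
qed

lemma measurable_pmf_conv_pow:
  assumes [measurable]: "\<And>a. (\<lambda>q. pmf q a) \<in> borel_measurable M"
  shows "(\<lambda>q. pmf (conv_pow q k) m) \<in> borel_measurable M"
proof (induction k arbitrary: m)
  case (Suc k)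
  note Suc[measurable]
  show ?case unfolding pmf_conv_pow_Suc by measurable
qed simp

lemma qlaw_append: "qlaw (xs @ ys) k = bind_pmf (qlaw xs k) (qlaw ys)"
proof (induction xs arbitrary: k)
  case (Cons q xs)
  then have "qlaw (xs @ ys) = (\<lambda>x. bind_pmf (qlaw xs x) (qlaw ys))" by auto
  then show ?case by (simp add: bind_assoc_pmf)
qed (simp add: bind_return_pmf)

lemma ennreal_pmf_bind_ge:
  "ennreal (pmf p i) * ennreal (pmf (f i) j) \<le> ennreal (pmf (bind_pmf p f) j)"
proof -
  have "ennreal (pmf p i) * ennreal (pmf (f i) j)
      = (\<integral>\<^sup>+x. ennreal (pmf (f i) j) * indicator {i} x \<partial>measure_pmf p)"
    by (simp add: emeasure_pmf_single mult.commute)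
  also have "\<dots> \<le> (\<integral>\<^sup>+x. ennreal (pmf (f x) j) \<partial>measure_pmf p)"
    by (intro nn_integral_mono) (auto split: split_indicator)
  finally show ?thesis by (simp add: ennreal_pmf_bind)
qed

lemma (in prob_space) nn_integral_stream_space_mult_sdrop:
  assumes F: "F \<in> borel_measurable (stream_space M)" and G: "G \<in> borel_measurable (stream_space M)"
    and F_stake: "\<And>\<omega> \<omega>'. stake n \<omega> = stake n \<omega>' \<Longrightarrow> F \<omega> = F \<omega>'"
  shows "(\<integral>\<^sup>+\<omega>. F \<omega> * G (sdrop n \<omega>) \<partial>stream_space M)
      = (\<integral>\<^sup>+\<omega>. F \<omega> \<partial>stream_space M) * (\<integral>\<^sup>+\<omega>. G \<omega> \<partial>stream_space M)"
  using F F_stake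
proof (induction n arbitrary: F)
  case 0
  have "F \<omega> = F (sconst undefined)" for \<omega> by (rule "0.prems"(2)) simp
  then obtain c where c: "\<And>\<omega>. F \<omega> = c" by blast
  interpret S: prob_space "stream_space M" by (rule prob_space_stream_space)
  show ?case by (simp add: c nn_integral_cmult G S.emeasure_space_1)
next
  case (Suc n)
  note [measurable] = Suc.prems(1) G
  interpret S: prob_space "stream_space M" by (rule prob_space_stream_space)
  have FG: "(\<lambda>\<omega>. F \<omega> * G (sdrop (Suc n) \<omega>)) \<in> borel_measurable (stream_space M)"
    by measurable
  have "(\<integral>\<^sup>+\<omega>. F \<omega> * G (sdrop (Suc n) \<omega>) \<partial>stream_space M)
      = (\<integral>\<^sup>+x. (\<integral>\<^sup>+X. F (x ## X) * G (sdrop n X) \<partial>stream_space M) \<partial>M)"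
    using nn_integral_stream_space[OF FG] by simp
  also have "\<dots> = (\<integral>\<^sup>+x. (\<integral>\<^sup>+X. F (x ## X) \<partial>stream_space M)
      * (\<integral>\<^sup>+\<omega>. G \<omega> \<partial>stream_space M) \<partial>M)"
  proof (rule nn_integral_cong)
    fix x assume "x \<in> space M"
    then have "(\<lambda>X. F (x ## X)) \<in> borel_measurable (stream_space M)"
      by measurable
    then show "(\<integral>\<^sup>+X. F (x ## X) * G (sdrop n X) \<partial>stream_space M)
        = (\<integral>\<^sup>+X. F (x ## X) \<partial>stream_space M) * (\<integral>\<^sup>+\<omega>. G \<omega> \<partial>stream_space M)"
      by (rule Suc.IH) (rule Suc.prems(2), simp)
  qed
  also have "\<dots> = (\<integral>\<^sup>+x. (\<integral>\<^sup>+X. F (x ## X) \<partial>stream_space M) \<partial>M)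
      * (\<integral>\<^sup>+\<omega>. G \<omega> \<partial>stream_space M)"
  proof (rule nn_integral_multc)
    have "(\<lambda>p. fst p ## snd p) \<in> measurable (M \<Otimes>\<^sub>M stream_space M) (stream_space M)"
      by measurable
    then have "(\<lambda>(x, X). F (x ## X)) \<in> borel_measurable (M \<Otimes>\<^sub>M stream_space M)"
      unfolding case_prod_beta' using Suc.prems(1) by (rule measurable_compose)
    then show "(\<lambda>x. \<integral>\<^sup>+X. F (x ## X) \<partial>stream_space M) \<in> borel_measurable M"
      by (rule S.borel_measurable_nn_integral)
  qed
  also have "(\<integral>\<^sup>+x. (\<integral>\<^sup>+X. F (x ## X) \<partial>stream_space M) \<partial>M)
      = (\<integral>\<^sup>+\<omega>. F \<omega> \<partial>stream_space M)"
    by (rule nn_integral_stream_space[symmetric, OF Suc.prems(1)])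
  finally show ?case .
qed

lemma emeasure_level_set_nonzero:
  fixes f :: "'a \<Rightarrow> real"
  assumes [measurable]: "f \<in> borel_measurable M"
    and "emeasure M {x \<in> space M. 0 < f x} \<noteq> 0"
  shows "\<exists>\<delta>>0. emeasure M {x \<in> space M. \<delta> \<le> f x} \<noteq> 0"
proof (rule ccontr)
  assume "\<not> ?thesis"
  then have "emeasure M (\<Union>m. {x \<in> space M. 1 / Suc m \<le> f x}) = 0"
    by (intro emeasure_UN_eq_0) auto
  moreover have "{x \<in> space M. 0 < f x} = (\<Union>m. {x \<in> space M. 1 / Suc m \<le> f x})"
  proof safe
    fix x assume "x \<in> space M" "0 < f x"
    then obtain m where "1 / Suc m < f x" by (auto elim: nat_approx_posE)
    with \<open>x \<in> space M\<close> show "x \<in> (\<Union>m. {x \<in> space M. 1 / Suc m \<le> f x})"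
      by (auto intro!: exI[of _ m])
  next
    fix x m assume "1 / Suc m \<le> f x"
    then show "0 < f x" by (rule order.strict_trans2[rotated]) simp
  qed
  ultimately show False using assms(2) by simp
qed

locale random_environment = prob_space \<mu> for \<mu> :: "nat pmf measure" +
  assumes measurable_pmf: "\<And>k. (\<lambda>q. pmf q k) \<in> borel_measurable \<mu>"
begin

lemma measurable_ennreal_pmf_qlaw:
  "(\<lambda>\<omega>. ennreal (pmf (qlaw (stake n \<omega>) k) j)) \<in> borel_measurable (stream_space \<mu>)"
proof (induction n arbitrary: k j)
  case (Suc n)
  note [measurable] = measurable_pmf_conv_pow[OF measurable_pmf] Suc
  show ?case
    by (simp add: ennreal_pmf_bind nn_integral_measure_pmf nn_integral_count_space_nat) measurable
qed simp

lemma measurable_pmf_qlaw: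
  "(\<lambda>\<omega>. pmf (qlaw (stake n \<omega>) k) j) \<in> borel_measurable (stream_space \<mu>)"
proof -
  have "(\<lambda>\<omega>. enn2real (ennreal (pmf (qlaw (stake n \<omega>) k) j))) \<in> borel_measurable (stream_space \<mu>)"
    using measurable_ennreal_pmf_qlaw by measurable
  then show ?thesis by simp
qed

lemma ennreal_bpre_prob_single:
  "ennreal (bpre_prob \<mu> k n {j})
    = (\<integral>\<^sup>+\<omega>. ennreal (pmf (qlaw (stake n \<omega>) k) j) \<partial>stream_space \<mu>)"
proof -
  interpret S: prob_space "stream_space \<mu>" by (rule prob_space_stream_space)
  show ?thesis
    unfolding bpre_prob_def measure_pmf_single
    by (rule nn_integral_eq_integral[symmetric])
      (auto intro!: S.integrable_const_bound measurable_pmf_qlaw pmf_le_1)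
qed

lemma bpre_prob_nonneg: "0 \<le> bpre_prob \<mu> k n A"
  unfolding bpre_prob_def by simp

lemma bpre_prob_le_1: "bpre_prob \<mu> k n {j} \<le> 1"
proof -
  interpret S: prob_space "stream_space \<mu>" by (rule prob_space_stream_space)
  have "ennreal (bpre_prob \<mu> k n {j}) \<le> (\<integral>\<^sup>+\<omega>. 1 \<partial>stream_space \<mu>)"
    unfolding ennreal_bpre_prob_single by (intro nn_integral_mono) (simp add: pmf_le_1)
  then show ?thesis by (simp add: S.emeasure_space_1)
qed

lemma bpre_prob_chapman_kolmogorov_le:
  "bpre_prob \<mu> k n {i} * bpre_prob \<mu> i m {j} \<le> bpre_prob \<mu> k (n + m) {j}"
proof -
  have "ennreal (bpre_prob \<mu> k n {i}) * ennreal (bpre_prob \<mu> i m {j})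
      = (\<integral>\<^sup>+\<omega>. ennreal (pmf (qlaw (stake n \<omega>) k) i)
          * ennreal (pmf (qlaw (stake m (sdrop n \<omega>)) i) j) \<partial>stream_space \<mu>)"
    unfolding ennreal_bpre_prob_single
    by (rule nn_integral_stream_space_mult_sdrop[symmetric])
      (simp_all add: measurable_ennreal_pmf_qlaw)
  also have "\<dots> \<le> ennreal (bpre_prob \<mu> k (n + m) {j})"
    unfolding ennreal_bpre_prob_single
    by (intro nn_integral_mono) (simp add: qlaw_append ennreal_pmf_bind_ge flip: stake_add)
  finally show ?thesis
    by (simp add: bpre_prob_nonneg flip: ennreal_mult)
qed

lemma ck_kernel_bpre_prob: "ck_kernel (\<lambda>k n j. bpre_prob \<mu> k n {j})"
  by unfold_locales (fact bpre_prob_nonneg bpre_prob_le_1 bpre_prob_chapman_kolmogorov_le)+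

lemma bpre_prob_zero_self: "bpre_prob \<mu> k 0 {k} = 1"
  using prob_space.prob_space[OF prob_space_stream_space] by (simp add: bpre_prob_def)

lemma bpre_prob_finite:
  assumes "finite A"
  shows "bpre_prob \<mu> k n A = (\<Sum>j\<in>A. bpre_prob \<mu> k n {j})"
proof -
  interpret S: prob_space "stream_space \<mu>" by (rule prob_space_stream_space)
  have "integrable (stream_space \<mu>) (\<lambda>\<omega>. pmf (qlaw (stake n \<omega>) k) j)" for j
    by (auto intro!: S.integrable_const_bound measurable_pmf_qlaw pmf_le_1)
  then show ?thesis
    using assms
    by (simp add: bpre_prob_def measure_measure_pmf_finite measure_pmf_single
        Bochner_Integration.integral_sum)
qed

lemma bpre_prob_one_step_ge:
  assumes "E \<in> sets \<mu>" and "0 \<le> \<delta>"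
    and "\<And>q. q \<in> E \<Longrightarrow> \<delta> \<le> pmf q 0 \<and> \<delta> \<le> pmf q z" and "1 \<le> j"
  shows "measure \<mu> E * \<delta> ^ j \<le> bpre_prob \<mu> j 1 {z}"
proof -
  interpret S: prob_space "stream_space \<mu>" by (rule prob_space_stream_space)
  obtain k where j: "j = Suc k" using assms(4) by (cases j) auto
  have "ennreal (measure \<mu> E * \<delta> ^ j) = (\<integral>\<^sup>+q. ennreal (\<delta> ^ j) * indicator E q \<partial>\<mu>)"
    using assms(1,2)
    by (subst nn_integral_cmult_indicator)
      (simp_all add: emeasure_eq_measure ennreal_mult' mult.commute)
  also have "\<dots> \<le> (\<integral>\<^sup>+q. ennreal (pmf (conv_pow q j) z) \<partial>\<mu>)"
  proof (intro nn_integral_mono)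
    fix q
    have "\<delta> ^ j \<le> pmf (conv_pow q j) z" if "q \<in> E"
    proof -
      have "\<delta> ^ j = \<delta> * \<delta> ^ k" by (simp add: j)
      also have "\<dots> \<le> pmf q z * pmf q 0 ^ k"
        using assms(2) assms(3)[OF that] by (intro mult_mono power_mono) auto
      also have "\<dots> \<le> pmf (conv_pow q j) z" unfolding j by (rule pmf_conv_pow_Suc_ge)
      finally show ?thesis .
    qed
    then show "ennreal (\<delta> ^ j) * indicator E q \<le> ennreal (pmf (conv_pow q j) z)"
      by (simp split: split_indicator)
  qed
  also have "\<dots> = (\<integral>\<^sup>+\<omega>. ennreal (pmf (conv_pow (shd \<omega>) j) z) \<partial>stream_space \<mu>)"
    using measurable_pmf_conv_pow[OF measurable_pmf]
    by (subst nn_integral_stream_space) (simp_all add: S.emeasure_space_1)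
  also have "\<dots> = ennreal (bpre_prob \<mu> j 1 {z})"
  proof -
    have "qlaw [] = return_pmf" by (rule ext) simp
    then show ?thesis unfolding ennreal_bpre_prob_single by (simp add: bind_return_pmf')
  qed
  finally show ?thesis by (simp add: bpre_prob_nonneg)
qed

lemma one_step_return_ge:
  assumes "0 < measure \<mu> {q \<in> space \<mu>. 0 < pmf q 0 \<and> 0 < pmf q z}"
  obtains \<eta> \<delta> where "0 < \<eta>" "0 < \<delta>" "\<delta> \<le> 1"
    and "\<And>m. 1 \<le> m \<Longrightarrow> \<eta> * \<delta> ^ m \<le> bpre_prob \<mu> m 1 {z}"
proof -
  note [measurable] = measurable_pmf
  have "\<exists>\<delta>>0. emeasure \<mu> {q \<in> space \<mu>. \<delta> \<le> min (pmf q 0) (pmf q z)} \<noteq> 0"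
    using assms by (intro emeasure_level_set_nonzero) (simp_all add: emeasure_eq_measure)
  then obtain \<delta> where \<delta>: "0 < \<delta>"
    and E: "emeasure \<mu> {q \<in> space \<mu>. \<delta> \<le> min (pmf q 0) (pmf q z)} \<noteq> 0"
    by blast
  define E where "E = {q \<in> space \<mu>. \<delta> \<le> min (pmf q 0) (pmf q z)}"
  have "E \<in> sets \<mu>" unfolding E_def by measurable
  moreover have "0 < measure \<mu> E"
    using E by (simp add: E_def emeasure_eq_measure zero_less_measure_iff)
  moreover obtain q where "q \<in> E"
    using E unfolding E_def by (metis emeasure_empty equals0I)
  then have "\<delta> \<le> 1" unfolding E_def using pmf_le_1[of q 0] by simp
  ultimately show ?thesis
    using \<delta> by (intro that[of "measure \<mu> E" \<delta>] bpre_prob_one_step_ge) (auto simp: E_def)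
qed

end

sublocale random_environment \<subseteq> ck_kernel "\<lambda>k n j. bpre_prob \<mu> k n {j}"
  by (rule ck_kernel_bpre_prob)

context random_environment
begin

lemma Cl_rate:
  assumes return: "\<And>n. 0 < bpre_prob \<mu> z n {z}"
    and one_step_pos: "\<And>m. 1 \<le> m \<Longrightarrow> 0 < bpre_prob \<mu> m 1 {z}"
    and "k \<in> Cl \<mu> z" and "j \<in> Cl \<mu> z"
  shows "eventually (\<lambda>n. 0 < bpre_prob \<mu> k n {j}) sequentially"
    and "(\<lambda>n. ln (bpre_prob \<mu> k n {j}) / real n) \<longlonglongrightarrow> rate z"
proof -
  obtain n\<^sub>2 n\<^sub>3 where k: "1 \<le> k" and j: "1 \<le> j"
    and zj: "0 < bpre_prob \<mu> z n\<^sub>2 {j}" and zk: "0 < bpre_prob \<mu> z n\<^sub>3 {k}"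
    using assms(3,4) unfolding Cl_def by blast
  from communicating_rate[OF return one_step_pos[OF k] zj zk one_step_pos[OF j]]
  show "eventually (\<lambda>n. 0 < bpre_prob \<mu> k n {j}) sequentially"
    and "(\<lambda>n. ln (bpre_prob \<mu> k n {j}) / real n) \<longlonglongrightarrow> rate z" .
qed

lemma window_int_rate:
  fixes kn :: "nat \<Rightarrow> int"
  assumes return: "\<And>n. 0 < bpre_prob \<mu> z n {z}"
    and one_step: "\<And>m. 1 \<le> m \<Longrightarrow> \<eta> * \<delta> ^ m \<le> bpre_prob \<mu> m 1 {z}"
    and \<eta>\<delta>: "0 < \<eta>" "0 < \<delta>" "\<delta> \<le> 1" and z: "1 \<le> z"
    and kn_ge: "eventually (\<lambda>n. int z \<le> kn n) sequentially"
    and kn_sublinear: "(\<lambda>n. real_of_int (kn n) / real n) \<longlonglongrightarrow> 0"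
  shows "eventually (\<lambda>n. 0 < bpre_prob \<mu> z n {m. 1 \<le> m \<and> int m \<le> kn n}) sequentially"
    and "(\<lambda>n. ln (bpre_prob \<mu> z n {m. 1 \<le> m \<and> int m \<le> kn n}) / real n) \<longlonglongrightarrow> rate z"
proof -
  have window: "{m. 1 \<le> m \<and> int m \<le> kn n} = {1..nat (kn n)}" for n
    by auto
  have K_ge: "eventually (\<lambda>n. z \<le> nat (kn n)) sequentially"
    using kn_ge by eventually_elim simp
  have K_sublinear: "(\<lambda>n. real (nat (kn n)) / real n) \<longlonglongrightarrow> 0"
    using kn_sublinear
    by (rule Lim_transform_eventually) (use kn_ge in \<open>auto elim: eventually_mono\<close>)
  from window_rate[OF ck_kernel_bpre_prob return one_step \<eta>\<delta> z K_ge K_sublinear]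
  show "eventually (\<lambda>n. 0 < bpre_prob \<mu> z n {m. 1 \<le> m \<and> int m \<le> kn n}) sequentially"
    and "(\<lambda>n. ln (bpre_prob \<mu> z n {m. 1 \<le> m \<and> int m \<le> kn n}) / real n) \<longlonglongrightarrow> rate z"
    by (simp_all only: window bpre_prob_finite[OF finite_atLeastAtMost])
qed

end

theorem lemma4p1:
  fixes \<mu> :: "nat pmf measure" and z :: nat
  assumes "prob_space \<mu>"
    and "\<And>k. (\<lambda>q. pmf q k) \<in> borel_measurable \<mu>"
    and "z \<ge> 1"
    and "measure \<mu> {q \<in> space \<mu>. pmf q 0 > 0 \<and> pmf q z > 0} > 0"
  shows "\<exists>L::real. L \<le> 0 \<and>
    (\<forall>k\<in>Cl \<mu> z. \<forall>j\<in>Cl \<mu> z.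
        eventually (\<lambda>n. bpre_prob \<mu> k n {j} > 0) sequentially \<and>
        (\<lambda>n. ln (bpre_prob \<mu> k n {j}) / real n) \<longlonglongrightarrow> L) \<and>
    (\<lambda>n. ln (bpre_prob \<mu> z n {z}) / real n) \<longlonglongrightarrow> L \<and>
    (\<forall>kn :: nat \<Rightarrow> int.
        (eventually (\<lambda>n. kn n \<ge> int z) sequentially \<and>
         (\<lambda>n. real_of_int (kn n) / real n) \<longlonglongrightarrow> 0) \<longrightarrow>
        eventually (\<lambda>n. bpre_prob \<mu> z n {m. 1 \<le> m \<and> int m \<le> kn n} > 0) sequentially \<and>
        (\<lambda>n. ln (bpre_prob \<mu> z n {m. 1 \<le> m \<and> int m \<le> kn n}) / real n) \<longlonglongrightarrow> L)"
proof -
  interpret random_environment \<mu>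
    using assms(1,2) by (intro random_environment.intro random_environment_axioms.intro)
  obtain \<eta> \<delta> where \<eta>\<delta>: "0 < \<eta>" "0 < \<delta>" "\<delta> \<le> 1"
    and one_step: "\<And>m. 1 \<le> m \<Longrightarrow> \<eta> * \<delta> ^ m \<le> bpre_prob \<mu> m 1 {z}"
    using one_step_return_ge[OF assms(4)] by blast
  have one_step_pos: "0 < bpre_prob \<mu> m 1 {z}" if "1 \<le> m" for m
    using \<eta>\<delta> by (intro order.strict_trans2[OF _ one_step[OF that]]) simp
  have return: "0 < bpre_prob \<mu> z n {z}" for n
    by (rule return_prob_pos) (simp add: bpre_prob_zero_self, rule one_step_pos[OF assms(3)])
  show ?thesis
    using rate_nonpos[OF return] return_rate[OF return]
      Cl_rate[OF return one_step_pos] window_int_rate[OF return one_step \<eta>\<delta> assms(3)]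
    by (intro exI[of _ "rate z"] conjI ballI allI impI) auto
qed

end
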